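(* Let $G$ be a torsion-free group, $\mathbb{F}$ a field, $\alpha$ a zero divisor in $\mathbb{F}[G]$ with $|supp(\alpha)|=4$ and $|S_\alpha|=10$, and $\beta$ a mate of $\alpha$. Let $B=supp(\alpha)$, $C=supp(\beta)$. If $s\in\Delta^i$ and $s'\in\Delta^j$ with $s\ne s'$ and $i,j\in\{3,4\}$, then $|\mathcal{V}(s)\cap\mathcal{V}(s')|\le2$.
   Context: $supp(\gamma)=\{x\in G:\gamma_x\ne0\}$; $S_\alpha=\{h^{-1}h':h\ne h',\ h,h'\in supp(\alpha)\}$. A mate of $\alpha$ is a non-zero $\beta$ with $\alpha\beta=0$ of minimal support size among all non-zero $\beta'$ with $\alpha\beta'=0$. $BC=\{bc:b\in B,c\in C\}$. For $s\in BC$, $R(s)=\{(b,c)\in B\times C:bc=s\}$, $r(s)=|R(s)|$; $\Delta^i=\{s\in BC:r(s)=i\}$; $\mathcal{V}(s)=\{g\in C:(sg^{-1},g)\in R(s)\}$. *)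

theory Defs
  imports "HOL-Algebra.Group"
begin

text \<open>Elements of the group algebra F[G] are modelled as functions from the
group elements to the field with finite support contained in the carrier.\<close>

definition supp :: "('g \<Rightarrow> 'f::zero) \<Rightarrow> 'g set" where
  "supp \<gamma> = {x. \<gamma> x \<noteq> 0}"

definition grp_ring_elem :: "('g, 'b) monoid_scheme \<Rightarrow> ('g \<Rightarrow> 'f::field) \<Rightarrow> bool" where
  "grp_ring_elem G \<gamma> \<longleftrightarrow> finite (supp \<gamma>) \<and> supp \<gamma> \<subseteq> carrier G"

definition grp_ring_mult :: "('g, 'b) monoid_scheme \<Rightarrow> ('g \<Rightarrow> 'f::field) \<Rightarrow> ('g \<Rightarrow> 'f) \<Rightarrow> 'g \<Rightarrow> 'f" where
  "grp_ring_mult G \<alpha> \<beta> x =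
     (if x \<in> carrier G then (\<Sum>h\<in>supp \<alpha>. \<alpha> h * \<beta> (inv\<^bsub>G\<^esub> h \<otimes>\<^bsub>G\<^esub> x)) else 0)"

definition torsion_free :: "('g, 'b) monoid_scheme \<Rightarrow> bool" where
  "torsion_free G \<longleftrightarrow>
     (\<forall>x\<in>carrier G. x \<noteq> \<one>\<^bsub>G\<^esub> \<longrightarrow> (\<forall>n::nat. n > 0 \<longrightarrow> x [^]\<^bsub>G\<^esub> n \<noteq> \<one>\<^bsub>G\<^esub>))"

definition zero_divisor :: "('g, 'b) monoid_scheme \<Rightarrow> ('g \<Rightarrow> 'f::field) \<Rightarrow> bool" where
  "zero_divisor G \<alpha> \<longleftrightarrow> grp_ring_elem G \<alpha> \<and> \<alpha> \<noteq> (\<lambda>_. 0) \<and>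
     (\<exists>\<beta>. grp_ring_elem G \<beta> \<and> \<beta> \<noteq> (\<lambda>_. 0) \<and>
        (grp_ring_mult G \<alpha> \<beta> = (\<lambda>_. 0) \<or> grp_ring_mult G \<beta> \<alpha> = (\<lambda>_. 0)))"

definition mate :: "('g, 'b) monoid_scheme \<Rightarrow> ('g \<Rightarrow> 'f::field) \<Rightarrow> ('g \<Rightarrow> 'f) \<Rightarrow> bool" where
  "mate G \<alpha> \<beta> \<longleftrightarrow> grp_ring_elem G \<beta> \<and> \<beta> \<noteq> (\<lambda>_. 0) \<and> grp_ring_mult G \<alpha> \<beta> = (\<lambda>_. 0) \<and>
     (\<forall>\<beta>'. grp_ring_elem G \<beta>' \<and> \<beta>' \<noteq> (\<lambda>_. 0) \<and> grp_ring_mult G \<alpha> \<beta>' = (\<lambda>_. 0)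
            \<longrightarrow> card (supp \<beta>) \<le> card (supp \<beta>'))"

definition S_set :: "('g, 'b) monoid_scheme \<Rightarrow> ('g \<Rightarrow> 'f::zero) \<Rightarrow> 'g set" where
  "S_set G \<alpha> = {inv\<^bsub>G\<^esub> h \<otimes>\<^bsub>G\<^esub> h' | h h'. h \<noteq> h' \<and> h \<in> supp \<alpha> \<and> h' \<in> supp \<alpha>}"

definition prodset :: "('g, 'b) monoid_scheme \<Rightarrow> 'g set \<Rightarrow> 'g set \<Rightarrow> 'g set" where
  "prodset G B C = {b \<otimes>\<^bsub>G\<^esub> c | b c. b \<in> B \<and> c \<in> C}"

definition Rrep :: "('g, 'b) monoid_scheme \<Rightarrow> 'g set \<Rightarrow> 'g set \<Rightarrow> 'g \<Rightarrow> ('g \<times> 'g) set" where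
  "Rrep G B C s = {(b, c). b \<in> B \<and> c \<in> C \<and> b \<otimes>\<^bsub>G\<^esub> c = s}"

definition rnum :: "('g, 'b) monoid_scheme \<Rightarrow> 'g set \<Rightarrow> 'g set \<Rightarrow> 'g \<Rightarrow> nat" where
  "rnum G B C s = card (Rrep G B C s)"

definition Delta :: "('g, 'b) monoid_scheme \<Rightarrow> 'g set \<Rightarrow> 'g set \<Rightarrow> nat \<Rightarrow> 'g set" where
  "Delta G B C i = {s \<in> prodset G B C. rnum G B C s = i}"

definition Vset :: "('g, 'b) monoid_scheme \<Rightarrow> 'g set \<Rightarrow> 'g set \<Rightarrow> 'g \<Rightarrow> 'g set" where
  "Vset G B C s = {g \<in> C. (s \<otimes>\<^bsub>G\<^esub> inv\<^bsub>G\<^esub> g, g) \<in> Rrep G B C s}"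

end

theory Submission
  imports Defs
begin

text \<open>Let W = V(s) \<inter> V(s') have n elements. For g \<noteq> h in W, both (s g^-1, s h^-1) and
(s' g^-1, s' h^-1) are pairs of distinct elements of B with quotient g h^-1 in S_alpha. These
pairs form a set U of at least n(n-1) pairs in which every quotient occurs at least twice, so U
has at least |U|/2 \<ge> n(n-1)/2 more elements than quotients. Deleting pairs never increases this
excess, and the 12 ordered pairs of distinct elements of B have excess 12 - 10 = 2, hence n \<le> 2.\<close>

definition offdiag :: "'a set \<Rightarrow> ('a \<times> 'a) set" where
  "offdiag X = {(x, y). x \<in> X \<and> y \<in> X \<and> x \<noteq> y}"

lemma offdiag_eq: "offdiag X = X \<times> X - Id_on X"
  by (auto simp: offdiag_def)

lemma finite_offdiag: "finite X \<Longrightarrow> finite (offdiag X)"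
  by (simp add: offdiag_eq)

lemma card_offdiag:
  assumes "finite X"
  shows "card (offdiag X) = card X * (card X - 1)"
proof -
  have "Id_on X = (\<lambda>x. (x, x)) ` X" by auto
  then have "card (Id_on X) = card X" by (simp add: card_image inj_on_def)
  then have "card (offdiag X) = card X * card X - card X"
    unfolding offdiag_eq using assms Id_on_subset_Times[of X]
    by (simp add: card_Diff_subset card_cartesian_product finite_subset)
  then show ?thesis by (simp add: diff_mult_distrib2)
qed

lemma card_image_excess_mono:
  assumes "finite P" "U \<subseteq> P"
  shows "card U + card (f ` P) \<le> card P + card (f ` U)"
proof -
  have "f ` P = f ` U \<union> f ` (P - U)" using assms(2) by auto
  then have "card (f ` P) \<le> card (f ` U) + card (P - U)"
    by (metis card_Un_le card_image_le assms(1) finite_Diff add_le_mono order_trans le_refl)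
  moreover have "card (P - U) + card U = card P"
    using assms by (metis card_Diff_subset card_mono finite_subset le_add_diff_inverse2)
  ultimately show ?thesis by linarith
qed

lemma card_image_le_half:
  assumes "finite U" "\<And>y. y \<in> f ` U \<Longrightarrow> 2 \<le> card {x \<in> U. f x = y}"
  shows "2 * card (f ` U) \<le> card U"
proof -
  have "2 * card (f ` U) = (\<Sum>y\<in>f ` U. 2)" by simp
  also have "\<dots> \<le> (\<Sum>y\<in>f ` U. card {x \<in> U. f x = y})"
    by (rule sum_mono) (rule assms(2))
  also have "\<dots> = card U"
    using sum.image_gen[OF assms(1), of "\<lambda>_. 1::nat" f] by simp
  finally show ?thesis .
qed

lemma S_set_eq_image_offdiag:
  "S_set G \<alpha> = (\<lambda>(h, h'). inv\<^bsub>G\<^esub> h \<otimes>\<^bsub>G\<^esub> h') ` offdiag (supp \<alpha>)"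
  unfolding S_set_def offdiag_def by auto

lemma (in group) inv_mult_inv_cancel:
  assumes "s \<in> carrier G" "g \<in> carrier G" "h \<in> carrier G"
  shows "inv (s \<otimes> inv g) \<otimes> (s \<otimes> inv h) = g \<otimes> inv h"
  using assms by (simp add: inv_mult_group m_assoc[symmetric]) (simp add: m_assoc)

lemma (in group) card_Vset_inter_bound:
  assumes "finite B" "B \<subseteq> carrier G" "finite C" "C \<subseteq> carrier G"
    and "s \<in> carrier G" "s' \<in> carrier G" "s \<noteq> s'"
  defines "W \<equiv> Vset G B C s \<inter> Vset G B C s'"
    and "q \<equiv> \<lambda>(h, h'). inv h \<otimes> h'"
  shows "card W * (card W - 1) \<le> 2 * (card (offdiag B) - card (q ` offdiag B))"
proof -
  define shift where "shift t = (\<lambda>(g, h). (t \<otimes> inv g, t \<otimes> inv h))" for t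
  define U where "U = shift s ` offdiag W \<union> shift s' ` offdiag W"
  have W_mem: "g \<in> carrier G \<and> s \<otimes> inv g \<in> B \<and> s' \<otimes> inv g \<in> B" if "g \<in> W" for g
    using that assms(4) unfolding W_def Vset_def Rrep_def by auto
  have "finite W" using assms(3) unfolding W_def Vset_def by auto
  have shift_inj: "t \<otimes> inv g = t \<otimes> inv h \<Longrightarrow> g = h"
    if "t \<in> carrier G" "g \<in> carrier G" "h \<in> carrier G" for t g h
    using that by (metis inv_closed inv_inv Units_l_cancel Units_eq)
  have "t \<in> {s, s'} \<Longrightarrow> shift t ` offdiag W \<subseteq> offdiag B" for t
    using W_mem assms(5,6) shift_inj by (fastforce simp: shift_def offdiag_def)
  then have U_sub: "U \<subseteq> offdiag B" unfolding U_def by blast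
  then have U_fin: "finite U" using finite_subset finite_offdiag assms(1) by blast
  have q_shift: "q (shift t (g, h)) = g \<otimes> inv h" if "t \<in> {s, s'}" "(g, h) \<in> offdiag W" for t g h
    using that W_mem assms(5,6) inv_mult_inv_cancel by (auto simp: q_def shift_def offdiag_def)
  have "inj_on (shift s) (offdiag W)"
    using W_mem assms(5) shift_inj by (auto simp: inj_on_def shift_def offdiag_def)
  then have "card (offdiag W) \<le> card U"
    unfolding U_def using card_mono[OF _ Un_upper1] finite_offdiag[OF \<open>finite W\<close>]
    by (metis card_image finite_Un finite_imageI)
  moreover have "2 * card (q ` U) \<le> card U"
  proof (rule card_image_le_half[OF U_fin])
    fix y assume "y \<in> q ` U"
    then obtain g h where gh: "(g, h) \<in> offdiag W" "y = g \<otimes> inv h"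
      unfolding U_def using q_shift by auto
    have "shift s (g, h) \<noteq> shift s' (g, h)"
      using gh W_mem assms(5-7) by (auto simp: shift_def offdiag_def)
    moreover have "{shift s (g, h), shift s' (g, h)} \<subseteq> {x \<in> U. q x = y}"
      using gh q_shift unfolding U_def by auto
    ultimately show "2 \<le> card {x \<in> U. q x = y}"
      using card_mono[OF _ \<open>{_, _} \<subseteq> _\<close>] U_fin by auto
  qed
  moreover have "card U + card (q ` offdiag B) \<le> card (offdiag B) + card (q ` U)"
    by (rule card_image_excess_mono[OF finite_offdiag[OF assms(1)] U_sub])
  ultimately show ?thesis
    using card_offdiag[OF \<open>finite W\<close>] by linarith
qed

theorem mainTheorem18:
  fixes G :: "('g, 'b) monoid_scheme" and \<alpha> \<beta> :: "'g \<Rightarrow> 'f::field"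
    and s s' :: 'g and i j :: nat
  assumes "group G" and "torsion_free G"
    and "zero_divisor G \<alpha>"
    and "card (supp \<alpha>) = 4" and "card (S_set G \<alpha>) = 10"
    and "mate G \<alpha> \<beta>"
    and "s \<in> Delta G (supp \<alpha>) (supp \<beta>) i" and "s' \<in> Delta G (supp \<alpha>) (supp \<beta>) j"
    and "s \<noteq> s'" and "i \<in> {3, 4}" and "j \<in> {3, 4}"
  shows "card (Vset G (supp \<alpha>) (supp \<beta>) s \<inter> Vset G (supp \<alpha>) (supp \<beta>) s') \<le> 2"
proof -
  interpret group G by fact
  define B where "B = supp \<alpha>"
  define C where "C = supp \<beta>"
  define n where "n = card (Vset G B C s \<inter> Vset G B C s')"
  have B: "finite B" "B \<subseteq> carrier G"
    using assms(3) unfolding B_def zero_divisor_def grp_ring_elem_def by auto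
  have C: "finite C" "C \<subseteq> carrier G"
    using assms(6) unfolding C_def mate_def grp_ring_elem_def by auto
  have "s \<in> carrier G" "s' \<in> carrier G"
    using assms(7,8) B(2) C(2) unfolding B_def C_def Delta_def prodset_def by auto
  from card_Vset_inter_bound[OF B C this assms(9)]
  have "n * (n - 1) \<le> 2 * (12 - 10)"
    using assms(4,5) card_offdiag[OF B(1)]
    unfolding n_def B_def C_def S_set_eq_image_offdiag by simp
  moreover have "3 * 2 \<le> n * (n - 1)" if "3 \<le> n"
    using mult_le_mono[OF that, of 2 "n - 1"] that by simp
  ultimately show ?thesis unfolding n_def B_def C_def by linarith
qed

end
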